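(* Assume the setup below and let $\boldsymbol{\lambda}\in\mathcal{P}(l,n)$. There exists a unique $l$-tuple $\tilde{\mathbf{C}}=(\tilde{C}^0,\dots,\tilde{C}^{l-1})$ of strictly decreasing sequences of integers such that (ii) $\tilde{C}_{[t]}=C_{[t]}(\boldsymbol{\lambda})$ as multisets for all $0\le t\le d$; (iii) $\tilde{C}^p\subseteq\tilde{C}^{p-1}$ (as sets) for every $p\in J$ with $p\ne0$; (iv) if $0\in I_0$, then $S^{-1}\tilde{C}^0\subseteq\tilde{C}^{l-1}$. Here $\tilde{C}_{[t]}$ is formed from $\tilde{\mathbf{C}}$ by the same recipe as $C_{[t]}(\boldsymbol{\lambda})$ is formed from $\mathbf{C}(\boldsymbol{\lambda})$.
   Context: Fix positive integers $l,n$. Partitions, Young diagrams, contents, $\mathcal{P}(l,n)$ ($l$-multipartitions of $n$) are as usual. For $r\in\mathbb{Z}$, $\beta^r(\lambda)=(\lambda_i+r+1-i)_{i\ge1}$. For a strictly decreasing integer sequence $C$ and $i\in\mathbb{Z}$, $S^iC=(C_1+i,C_2+i,\dots)$. Parameters: $H_1,\dots,H_{l-1}\in\mathbb{Q}$, $H_0=-(H_1+\dots+H_{l-1})$, $d$ a positive integer with $dH_i\in\mathbb{Z}$. Put $\theta=(1+H_0,H_1,\dots,H_{l-1})$. Let $S_l$ be the permutations of $\{0,\dots,l-1\}$, generated by $s_i$ ($1\le i\le l-1$) transposing $i-1,i$, acting on $\mathbb{Q}^l$ by: $s_i\cdot\theta$ has entry $\theta_{i-1}+\theta_i$ in position $i-1$,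 $-\theta_i$ in position $i$, $\theta_i+\theta_{i+1}$ in position $i+1$, otherwise unchanged (indices mod $l$). Let $R\subset\mathbb{Z}^l$ be generated by $\alpha_i=-e_{i-1}+2e_i-e_{i+1}$ (indices mod $l$), $\tilde{S}_l=R\rtimes S_l$ acting on $\{\theta\in\mathbb{Q}^l:\sum\theta_i=1\}$ with $R$ by translations, $\mathbb{Z}^l_0$ the integer vectors of coordinate sum $0$, and $\phi(\mathbf{r})=\sum_j(r_{j-1}-r_j)e_j$ (indices mod $l$). Fix $w_\theta=\phi(\mathbf{r})w\in\tilde{S}_l$ ($\mathbf{r}\in\mathbb{Z}^l_0$, $w\in S_l$) with $\boldsymbol{\epsilon}=w_\theta\cdot\theta$ satisfying $0\le\varepsilon_i\le1$; let $J=\{j:\varepsilon_j=0\}$; then $d\boldsymbol{\epsilon}\in\mathbb{Z}^l$. Let $m_i(\mathbf{c})=c_0+\dots+c_i$ and $I_t=\{p:m_p(d\boldsymbol{\epsilon})=t\}$ for $0\le t\le d$. For $\boldsymbol{\lambda}\in\mathcal{P}(l,n)$ put $C^p(\boldsymbol{\lambda})=\beta^{r_p}(\lambda^{(w^{-1}(p))})$ and $\mathbf{C}(\boldsymbol{\lambda})=(C^0,\dots,C^{l-1})$. For $1\le t\le d-1$ let $C_{[t]}$ be the multiset union $\biguplus_{p\in I_t}C^p$, and let $C_{[0]}=C_{[d]}$ be the multiset union $\biguplus_{p\in I_0}S^{-1}C^p\uplus\biguplus_{p\in I_d}C^p$. *)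

theory Defs
  imports Complex_Main "HOL-Combinatorics.Transposition"
begin

(* Partitions: \<lambda> :: nat \<Rightarrow> nat, where \<lambda> i is the (i+1)-th part \<lambda>_(i+1). *)
definition is_partition :: "(nat \<Rightarrow> nat) \<Rightarrow> bool" where
  "is_partition la \<longleftrightarrow> (\<forall>i. la (Suc i) \<le> la i) \<and> finite {i. la i \<noteq> 0}"

definition partition_size :: "(nat \<Rightarrow> nat) \<Rightarrow> nat" where
  "partition_size la = (\<Sum>i\<in>{i. la i \<noteq> 0}. la i)"

definition multipartition :: "nat \<Rightarrow> nat \<Rightarrow> (nat \<Rightarrow> nat \<Rightarrow> nat) \<Rightarrow> bool" where
  "multipartition l n la \<longleftrightarrow> (\<forall>p<l. is_partition (la p)) \<and> (\<Sum>p<l. partition_size (la p)) = n"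

(* beta^r(\<lambda>), 0-indexed: entry i (i.e. the (i+1)-th) is \<lambda>_(i+1) + r + 1 - (i+1) *)
definition beta :: "int \<Rightarrow> (nat \<Rightarrow> nat) \<Rightarrow> nat \<Rightarrow> int" where
  "beta r la i = int (la i) + r - int i"

definition strict_decr :: "(nat \<Rightarrow> int) \<Rightarrow> bool" where
  "strict_decr C \<longleftrightarrow> (\<forall>i. C (Suc i) < C i)"

definition shiftS :: "int \<Rightarrow> (nat \<Rightarrow> int) \<Rightarrow> nat \<Rightarrow> int" where
  "shiftS k C i = C i + k"

(* theta = (1 + H_0, H_1, ..., H_{l-1}), H_0 = -(H_1+...+H_{l-1}); zero outside {0..<l} *)
definition theta :: "nat \<Rightarrow> (nat \<Rightarrow> rat) \<Rightarrow> nat \<Rightarrow> rat" where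
  "theta l H j = (if j = 0 then 1 - (\<Sum>i\<in>{1..<l}. H i) else if j < l then H j else 0)"

definition alpha :: "nat \<Rightarrow> nat \<Rightarrow> nat \<Rightarrow> rat" where
  "alpha l i j = (if j = i mod l then 2 else 0) - (if j = (i + l - 1) mod l then 1 else 0)
                 - (if j = (i + 1) mod l then 1 else 0)"

definition sgen :: "nat \<Rightarrow> nat \<Rightarrow> (nat \<Rightarrow> rat) \<Rightarrow> nat \<Rightarrow> rat" where
  "sgen l i th j = (if j < l then th j - th i * alpha l i j else th j)"

(* The action of S_l generated by the s_i: Sact l w th th' means w . th = th' *)
inductive Sact :: "nat \<Rightarrow> (nat \<Rightarrow> nat) \<Rightarrow> (nat \<Rightarrow> rat) \<Rightarrow> (nat \<Rightarrow> rat) \<Rightarrow> bool"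
  for l :: nat where
  Sact_id: "Sact l id th th"
| Sact_gen: "Sact l w th th' \<Longrightarrow> 1 \<le> i \<Longrightarrow> i < l \<Longrightarrow>
     Sact l (transpose (i - 1) i \<circ> w) th (sgen l i th')"

definition phi :: "nat \<Rightarrow> (nat \<Rightarrow> int) \<Rightarrow> nat \<Rightarrow> int" where
  "phi l r j = (if j < l then r ((j + l - 1) mod l) - r j else 0)"

definition Iset :: "nat \<Rightarrow> nat \<Rightarrow> (nat \<Rightarrow> rat) \<Rightarrow> nat \<Rightarrow> nat set" where
  "Iset l d eps t = {p. p < l \<and> of_nat d * (\<Sum>i\<le>p. eps i) = of_nat t}"

definition Jset :: "nat \<Rightarrow> (nat \<Rightarrow> rat) \<Rightarrow> nat set" where
  "Jset l eps = {j. j < l \<and> eps j = 0}"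

(* Multiset union of strictly decreasing (hence injective) sequences, as multiplicity
   function int \<Rightarrow> nat.  C_[t] for 1 \<le> t \<le> d-1, and C_[0] = C_[d]. *)
definition Cbracket :: "nat \<Rightarrow> nat \<Rightarrow> (nat \<Rightarrow> rat) \<Rightarrow> (nat \<Rightarrow> nat \<Rightarrow> int) \<Rightarrow> nat \<Rightarrow> int \<Rightarrow> nat" where
  "Cbracket l d eps C t x =
     (if 1 \<le> t \<and> t \<le> d - 1 then card {p \<in> Iset l d eps t. x \<in> range (C p)}
      else card {p \<in> Iset l d eps 0. x \<in> range (shiftS (-1) (C p))}
         + card {p \<in> Iset l d eps d. x \<in> range (C p)})"

end

theory Submission
  imports Defs "HOL-Library.Infinite_Set"
begin

text \<open>
  Put eps = w_theta . theta; it has nonnegative coordinates in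
  (1/d)Z summing to 1, so the levels m_p(d eps) increase weakly from 0 to d.
  Group the positions into blocks: block t = I_t for 1 \<le> t \<le> d-1 and
  block d = I_d \<union> I_0, where the sequences of I_0 are shifted by -1 and
  placed after those of I_d.  Then C_[t] records, for every integer x, how many
  (shifted) sequences of block t contain x, while conditions (iii) and (iv) say
  that inside each block the ranges form a decreasing chain.  A chain of sets is
  determined by these cover counts (the k-th set consists of the points covered
  at least k times), and every cover count function is realised by such a chain.
  Finally a strictly decreasing integer sequence is determined by its range, and
  every Maya set (bounded above, containing all sufficiently negative integers)
  is such a range.
\<close>

text \<open>A strictly decreasing sequence is determined by its range: its i-th entry is
  the element of the range having exactly i larger elements.\<close>

lemma strict_decr_less:
  assumes "strict_decr A" and "i < j"
  shows "A j < A i"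
  using assms(2)
  by (induction j) (use assms(1) in \<open>auto simp: strict_decr_def less_Suc_eq intro: less_trans\<close>)

lemma strict_decr_le:
  assumes "strict_decr A" and "i \<le> j"
  shows "A j \<le> A i"
  using assms strict_decr_less[OF assms(1)] by (cases "i = j") (auto intro: less_imp_le)

lemma strict_decr_card_above:
  assumes "strict_decr A"
  shows "card {y \<in> range A. A i < y} = i"
proof -
  have "inj A"
    by (rule injI) (metis assms strict_decr_less linorder_neqE_nat order_less_irrefl)
  moreover have "{y \<in> range A. A i < y} = A ` {..<i}"
  proof (intro equalityI subsetI)
    fix y assume "y \<in> {y \<in> range A. A i < y}"
    then obtain j where "y = A j" "A i < A j" by auto
    moreover have "j < i"
      using strict_decr_le[OF assms, of i j] \<open>A i < A j\<close> by linarith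
    ultimately show "y \<in> A ` {..<i}" by simp
  qed (auto intro: strict_decr_less[OF assms])
  ultimately show ?thesis by (simp add: card_image inj_on_subset)
qed

lemma strict_decr_eq_if_range_eq:
  assumes A: "strict_decr A" and B: "strict_decr B" and R: "range A = range B"
  shows "A = B"
proof
  fix i
  define above where "above z = {y \<in> range A. z < y}" for z
  have fin: "finite (above z)" for z
  proof (rule finite_subset)
    show "above z \<subseteq> {z<..A 0}"
      unfolding above_def using strict_decr_le[OF A, of 0] by auto
  qed simp
  have card_A: "card (above (A i)) = i" and card_B: "card (above (B i)) = i"
    using strict_decr_card_above[OF A] strict_decr_card_above[OF B] R by (simp_all add: above_def)
  have shrink: "above y \<subset> above x" if "x < y" "y \<in> range A" for x y
    using that unfolding above_def by auto
  show "A i = B i"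
  proof (rule linorder_cases)
    assume "A i < B i"
    with shrink[of "A i" "B i"] R have "card (above (B i)) < card (above (A i))"
      by (metis psubset_card_mono fin rangeI)
    with card_A card_B show ?thesis by simp
  next
    assume "B i < A i"
    with shrink[of "B i" "A i"] have "card (above (A i)) < card (above (B i))"
      by (metis psubset_card_mono fin rangeI)
    with card_A card_B show ?thesis by simp
  qed
qed

definition maya_set :: "int set \<Rightarrow> bool" where
  "maya_set A \<longleftrightarrow> (\<exists>b. \<forall>x\<in>A. x \<le> b) \<and> (\<exists>c. \<forall>x\<le>c. x \<in> A)"

lemma maya_setI: "(\<And>x. x \<in> A \<Longrightarrow> x \<le> b) \<Longrightarrow> (\<And>x. x \<le> c \<Longrightarrow> x \<in> A) \<Longrightarrow> maya_set A"
  unfolding maya_set_def by blast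

lemma maya_set_Int:
  assumes "maya_set A" and "maya_set B"
  shows "maya_set (A \<inter> B)"
proof -
  obtain b c c' where "\<forall>x\<in>A. x \<le> b" "\<forall>x\<le>c. x \<in> A" "\<forall>x\<le>c'. x \<in> B"
    using assms unfolding maya_set_def by blast
  then show ?thesis by (intro maya_setI[of _ b "min c c'"]) simp_all
qed

lemma maya_set_Un:
  assumes "maya_set A" and "maya_set B"
  shows "maya_set (A \<union> B)"
proof -
  obtain b b' c where "\<forall>x\<in>A. x \<le> b" "\<forall>x\<in>B. x \<le> b'" "\<forall>x\<le>c. x \<in> A"
    using assms unfolding maya_set_def by blast
  then show ?thesis by (intro maya_setI[of _ "max b b'" c]) (auto simp: le_max_iff_disj)
qed

lemma maya_set_between:
  assumes "finite S" and "S \<noteq> {}" and maya: "\<And>q. q \<in> S \<Longrightarrow> maya_set (T q)"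
    and lower: "(\<Inter>q\<in>S. T q) \<subseteq> X" and upper: "X \<subseteq> (\<Union>q\<in>S. T q)"
  shows "maya_set X"
proof -
  have "maya_set (\<Inter>q\<in>S. T q) \<and> maya_set (\<Union>q\<in>S. T q)"
    using assms(1,2) maya
    by (induction S rule: finite_ne_induct) (auto intro: maya_set_Int maya_set_Un)
  then obtain b c where "\<forall>x\<in>\<Union>q\<in>S. T q. x \<le> b" "\<forall>x\<le>c. x \<in> (\<Inter>q\<in>S. T q)"
    unfolding maya_set_def by blast
  with lower upper show ?thesis by (intro maya_setI[of _ b c]) auto
qed

lemma maya_set_translate:
  assumes "maya_set A"
  shows "maya_set ((\<lambda>x. x + s) ` A)"
proof -
  obtain b c where bound: "\<forall>x\<in>A. x \<le> b" and low: "\<forall>x\<le>c. x \<in> A"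
    using assms unfolding maya_set_def by blast
  have "y \<in> (\<lambda>x. x + s) ` A" if "y \<le> c + s" for y
    using low that by (auto intro: image_eqI[where x = "y - s"])
  with bound show ?thesis by (intro maya_setI[of _ "b + s" "c + s"]) auto
qed

text \<open>Every Maya set R is enumerated in decreasing order by a strictly decreasing
  sequence: enumerate the set of distances b - x to an upper bound b of R.\<close>

lemma maya_set_strict_decr_enum:
  assumes "maya_set R"
  shows "\<exists>A. strict_decr A \<and> range A = R"
proof -
  obtain b c where bound: "\<forall>x\<in>R. x \<le> b" and low: "\<forall>x\<le>c. x \<in> R"
    using assms unfolding maya_set_def by blast
  define N where "N = (\<lambda>x. nat (b - x)) ` R"
  have "{..c} \<subseteq> R" using low by auto
  then have "infinite R"
    using infinite_Iic finite_subset by blast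
  moreover have "inj_on (\<lambda>x. nat (b - x)) R"
  proof (rule inj_onI)
    fix x y assume "x \<in> R" "y \<in> R" "nat (b - x) = nat (b - y)"
    then have "int (nat (b - x)) = int (nat (b - y))" and "x \<le> b" "y \<le> b"
      using bound by auto
    then show "x = y" by simp
  qed
  ultimately have infN: "infinite N"
    unfolding N_def using finite_imageD by blast
  define A where "A n = b - int (enumerate N n)" for n
  have "strict_decr A"
    unfolding strict_decr_def A_def using enumerate_step[OF infN] by simp
  moreover have "range A = R"
  proof -
    have "range A = (\<lambda>k. b - int k) ` range (enumerate N)"
      unfolding A_def by auto
    also have "\<dots> = (\<lambda>k. b - int k) ` N"
      by (simp add: range_enumerate[OF infN])
    also have "\<dots> = R"
      unfolding N_def image_image using bound by (auto simp: image_iff)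
    finally show ?thesis .
  qed
  ultimately show ?thesis by blast
qed

text \<open>Chains of sets indexed by a finite set S, linearly ordered by an injective
  key f.  Such a chain is determined by its cover counts: the set with the k-th
  smallest key consists of the points covered at least k times.  Conversely every
  function bounded by card S is the cover count function of such a chain.\<close>

definition rank_in :: "'a set \<Rightarrow> ('a \<Rightarrow> nat) \<Rightarrow> 'a \<Rightarrow> nat" where
  "rank_in S f p = card {q \<in> S. f q \<le> f p}"

definition cover_count :: "'a set \<Rightarrow> ('a \<Rightarrow> 'b set) \<Rightarrow> 'b \<Rightarrow> nat" where
  "cover_count S T x = card {q \<in> S. x \<in> T q}"

definition chain_on :: "'a set \<Rightarrow> ('a \<Rightarrow> nat) \<Rightarrow> ('a \<Rightarrow> 'b set) \<Rightarrow> bool" where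
  "chain_on S f T \<longleftrightarrow> (\<forall>p\<in>S. \<forall>q\<in>S. f q \<le> f p \<longrightarrow> T p \<subseteq> T q)"

lemma rank_in_mono:
  assumes "finite S" and "f q \<le> f p"
  shows "rank_in S f q \<le> rank_in S f p"
  unfolding rank_in_def using assms by (intro card_mono) auto

lemma rank_in_pos:
  assumes "finite S" and "p \<in> S"
  shows "1 \<le> rank_in S f p"
  unfolding rank_in_def using assms
  by (metis (mono_tags, lifting) One_nat_def Suc_leI card_gt_0_iff empty_iff
      finite_subset mem_Collect_eq order.refl subsetI)

lemma rank_in_le_card: "finite S \<Longrightarrow> rank_in S f p \<le> card S"
  unfolding rank_in_def by (intro card_mono) auto

lemma cover_count_le_card: "finite S \<Longrightarrow> cover_count S T x \<le> card S"
  unfolding cover_count_def by (intro card_mono) auto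

lemma rank_in_image:
  assumes fin: "finite S" and inj: "inj_on f S"
  shows "inj_on (rank_in S f) S" and "rank_in S f ` S = {1..card S}"
proof -
  have less: "rank_in S f q < rank_in S f p" if "q \<in> S" "p \<in> S" "f q < f p" for p q
  proof -
    have "{q' \<in> S. f q' \<le> f q} \<subseteq> {q' \<in> S. f q' \<le> f p}"
      and "p \<in> {q' \<in> S. f q' \<le> f p} - {q' \<in> S. f q' \<le> f q}"
      using that by auto
    then have "{q' \<in> S. f q' \<le> f q} \<subset> {q' \<in> S. f q' \<le> f p}" by blast
    then show ?thesis
      unfolding rank_in_def using fin by (auto intro: psubset_card_mono)
  qed
  show injr: "inj_on (rank_in S f) S"
    by (rule inj_onI) (metis less inj inj_onD linorder_neqE_nat order_less_irrefl)
  have "rank_in S f ` S \<subseteq> {1..card S}"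
    using rank_in_pos rank_in_le_card fin by fastforce
  then show "rank_in S f ` S = {1..card S}"
    by (rule card_subset_eq[rotated]) (use card_image[OF injr] in auto)
qed

lemma card_rank_le:
  assumes fin: "finite S" and inj: "inj_on f S" and k: "k \<le> card S"
  shows "card {p \<in> S. rank_in S f p \<le> k} = k"
proof -
  let ?r = "rank_in S f"
  have "?r ` {p \<in> S. ?r p \<le> k} = {1..k}"
  proof (intro equalityI subsetI)
    fix y assume "y \<in> ?r ` {p \<in> S. ?r p \<le> k}"
    then show "y \<in> {1..k}" using rank_in_pos[OF fin] by auto
  next
    fix y assume "y \<in> {1..k}"
    then have "y \<in> ?r ` S" using rank_in_image(2)[OF fin inj] k by auto
    then show "y \<in> ?r ` {p \<in> S. ?r p \<le> k}" using \<open>y \<in> {1..k}\<close> by auto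
  qed
  moreover have "inj_on ?r {p \<in> S. ?r p \<le> k}"
    using rank_in_image(1)[OF fin inj] by (rule inj_on_subset) auto
  ultimately show ?thesis using card_image by fastforce
qed

lemma chain_on_determined:
  assumes fin: "finite S" and p: "p \<in> S" and chain: "chain_on S f T"
  shows "T p = {x. rank_in S f p \<le> cover_count S T x}"
proof (intro set_eqI iffI)
  fix x assume "x \<in> T p"
  then have "{q \<in> S. f q \<le> f p} \<subseteq> {q \<in> S. x \<in> T q}"
    using chain p unfolding chain_on_def by blast
  then show "x \<in> {x. rank_in S f p \<le> cover_count S T x}"
    unfolding rank_in_def cover_count_def using fin by (auto intro: card_mono)
next
  fix x assume x: "x \<in> {x. rank_in S f p \<le> cover_count S T x}"
  show "x \<in> T p"
  proof (rule ccontr)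
    assume "x \<notin> T p"
    then have "{q \<in> S. x \<in> T q} \<subset> {q \<in> S. f q \<le> f p}"
      using chain p unfolding chain_on_def by fastforce
    then have "cover_count S T x < rank_in S f p"
      unfolding rank_in_def cover_count_def using fin by (auto intro: psubset_card_mono)
    with x show False by simp
  qed
qed

lemma chain_on_cong:
  "(\<And>p. p \<in> S \<Longrightarrow> T p = T' p) \<Longrightarrow> chain_on S f T \<longleftrightarrow> chain_on S f T'"
  unfolding chain_on_def by simp

lemma cover_count_cong:
  "(\<And>p. p \<in> S \<Longrightarrow> T p = T' p) \<Longrightarrow> cover_count S T x = cover_count S T' x"
  unfolding cover_count_def by (metis (mono_tags, lifting) mem_Collect_eq)

lemma level_sets_chain_on:
  assumes "finite S"
  shows "chain_on S f (\<lambda>p. {x. rank_in S f p \<le> M x})"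
  unfolding chain_on_def using rank_in_mono[OF assms] by (auto intro: order_trans)

lemma cover_count_level_sets:
  assumes "finite S" and "inj_on f S" and "M x \<le> card S"
  shows "cover_count S (\<lambda>p. {x. rank_in S f p \<le> M x}) x = M x"
  using card_rank_le[OF assms] unfolding cover_count_def by (simp only: mem_Collect_eq)

text \<open>Each generator
  changes theta by an integral multiple of a root alpha_i, whose coordinates sum to
  zero; hence the action preserves the coordinate sum and the property of having
  coordinates in (1/d)Z.\<close>

lemma sum_alpha: "0 < l \<Longrightarrow> (\<Sum>j<l. alpha l i j) = 0"
  unfolding alpha_def by (simp add: sum_subtractf)

lemma sum_sgen:
  assumes "0 < l"
  shows "(\<Sum>j<l. sgen l i th j) = (\<Sum>j<l. th j)"
proof -
  have "(\<Sum>j<l. sgen l i th j) = (\<Sum>j<l. th j - th i * alpha l i j)"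
    by (rule sum.cong) (auto simp: sgen_def)
  also have "\<dots> = (\<Sum>j<l. th j) - th i * (\<Sum>j<l. alpha l i j)"
    by (simp add: sum_subtractf sum_distrib_left)
  finally show ?thesis using sum_alpha[OF assms] by simp
qed

lemma Sact_sum: "Sact l w th th' \<Longrightarrow> (\<Sum>j<l. th' j) = (\<Sum>j<l. th j)"
  by (induction rule: Sact.induct) (simp_all add: sum_sgen)

lemma Sact_integral:
  assumes "Sact l w th th'" and "\<forall>j<l. of_nat d * th j \<in> \<int>"
  shows "\<forall>j<l. of_nat d * th' j \<in> \<int>"
  using assms
proof (induction rule: Sact.induct)
  case (Sact_gen w th th' i)
  show ?case
  proof (intro allI impI)
    fix j assume j: "j < l"
    have "alpha l i j \<in> \<int>" unfolding alpha_def by (intro Ints_diff) auto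
    moreover have "of_nat d * sgen l i th' j = of_nat d * th' j - (of_nat d * th' i) * alpha l i j"
      using j by (simp add: sgen_def algebra_simps)
    ultimately show "of_nat d * sgen l i th' j \<in> \<int>"
      using Sact_gen j by (auto intro: Ints_diff Ints_mult)
  qed
qed simp

lemma Sact_permutation:
  "Sact l w th th' \<Longrightarrow> bij w \<and> (\<forall>j\<ge>l. w j = j)"
proof (induction rule: Sact.induct)
  case (Sact_gen w th th' i)
  show ?case
  proof (intro conjI allI impI)
    show "bij (Transposition.transpose (i - 1) i \<circ> w)"
      using Sact_gen by (simp add: bij_comp)
    show "(Transposition.transpose (i - 1) i \<circ> w) j = j" if "l \<le> j" for j
      using Sact_gen that by simp
  qed
qed (simp add: bij_id[unfolded id_def])

lemma inv_perm_below:
  fixes w :: "nat \<Rightarrow> nat"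
  assumes "bij w" and "\<forall>j\<ge>l. w j = j" and "p < l"
  shows "inv w p < l"
proof (rule ccontr)
  assume "\<not> inv w p < l"
  then have "l \<le> inv w p" by simp
  then have "w (inv w p) = inv w p" using assms(2) by blast
  moreover have "w (inv w p) = p" using assms(1) by (simp add: bij_is_surj surj_f_inv_f)
  ultimately show False using \<open>\<not> inv w p < l\<close> assms(3) by simp
qed

lemma sum_theta: "0 < l \<Longrightarrow> (\<Sum>j<l. theta l H j) = 1"
proof -
  assume "0 < l"
  then have "{..<l} = insert 0 {1..<l}" by auto
  then have "(\<Sum>j<l. theta l H j) = theta l H 0 + (\<Sum>j\<in>{1..<l}. theta l H j)" by simp
  also have "(\<Sum>j\<in>{1..<l}. theta l H j) = (\<Sum>j\<in>{1..<l}. H j)"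
    by (rule sum.cong) (auto simp: theta_def)
  finally show ?thesis by (simp add: theta_def)
qed

lemma theta_integral:
  assumes "\<forall>i\<in>{1..<l}. of_nat d * H i \<in> \<int>"
  shows "\<forall>j<l. of_nat d * theta l H j \<in> \<int>"
proof (intro allI impI)
  fix j assume "j < l"
  have "of_nat d * theta l H 0 = of_nat d - (\<Sum>i\<in>{1..<l}. of_nat d * H i)"
    by (simp add: theta_def algebra_simps sum_distrib_left)
  also have "\<dots> \<in> \<int>" using assms by (intro Ints_diff Ints_sum) auto
  finally show "of_nat d * theta l H j \<in> \<int>"
    using assms \<open>j < l\<close> by (cases "j = 0") (simp_all add: theta_def)
qed

text \<open>phi(r) is a cyclic difference, so its coordinates sum to zero.\<close>

lemma sum_phi: "0 < l \<Longrightarrow> (\<Sum>j<l. phi l r j) = 0"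
proof -
  assume "0 < l"
  then obtain k where k: "l = Suc k" using not0_implies_Suc by blast
  have "(\<Sum>j<l. r ((j + l - 1) mod l)) = r k + (\<Sum>j<k. r ((Suc j + l - 1) mod l))"
    unfolding k by (subst sum.lessThan_Suc_shift) simp
  also have "(\<Sum>j<k. r ((Suc j + l - 1) mod l)) = (\<Sum>j<k. r j)"
  proof (rule sum.cong)
    fix j assume "j \<in> {..<k}"
    then have "Suc j + l - 1 = j + l" and "j < l" unfolding k by simp_all
    then have "(Suc j + l - 1) mod l = j" by simp
    then show "r ((Suc j + l - 1) mod l) = r j" by simp
  qed simp
  finally have "(\<Sum>j<l. r ((j + l - 1) mod l)) = (\<Sum>j<l. r j)" unfolding k by simp
  then show ?thesis unfolding phi_def by (simp add: sum_subtractf)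
qed

text \<open>The beta-sequence of a partition has a Maya set as range: it is bounded by
  la 0 + r and agrees with i \<mapsto> r - i once the parts vanish.\<close>

lemma beta_maya_set:
  assumes "is_partition la"
  shows "maya_set (range (beta r la))"
proof -
  obtain N where N: "\<forall>i\<ge>N. la i = 0"
    using assms unfolding is_partition_def
    by (metis (mono_tags) finite_nat_set_iff_bounded_le mem_Collect_eq not_less_eq_eq)
  have le_first: "int (la i) \<le> int (la 0)" for i
    using assms by (induction i) (auto simp: is_partition_def intro: order.trans)
  show ?thesis
  proof (rule maya_setI[of _ "int (la 0) + r" "r - int N"])
    show "x \<le> int (la 0) + r" if "x \<in> range (beta r la)" for x
      using that le_first unfolding beta_def by (smt (verit) imageE of_nat_0_le_iff)
    show "x \<in> range (beta r la)" if "x \<le> r - int N" for x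
    proof
      show "x = beta r la (nat (r - x))" using N that by (simp add: beta_def)
    qed simp
  qed
qed

lemma range_shiftS: "range (shiftS k f) = (\<lambda>x. x + k) ` range f"
  unfolding shiftS_def by auto

text \<open>The setting of the theorem: eps has nonnegative coordinates in (1/d)Z
  summing to 1.  The level of p is d times the p-th partial sum of eps; it is a
  monotone integer-valued function from 0 to d, so I_t consists of the positions of
  level t, and p \<noteq> 0 lies in J exactly when the level does not increase at p.\<close>

locale alcove_point =
  fixes l d :: nat and eps :: "nat \<Rightarrow> rat"
  assumes l_pos: "0 < l" and d_pos: "0 < d"
    and eps_nonneg: "\<And>j. j < l \<Longrightarrow> 0 \<le> eps j"
    and eps_integral: "\<And>j. j < l \<Longrightarrow> of_nat d * eps j \<in> \<int>"
    and eps_sum: "(\<Sum>j<l. eps j) = 1"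
begin

definition level :: "nat \<Rightarrow> int" where
  "level p = \<lfloor>of_nat d * (\<Sum>i\<le>p. eps i)\<rfloor>"

lemma of_int_level:
  assumes "p < l"
  shows "of_int (level p) = of_nat d * (\<Sum>i\<le>p. eps i)"
proof -
  have "of_nat d * (\<Sum>i\<le>p. eps i) \<in> \<int>"
    unfolding sum_distrib_left using assms eps_integral by (intro Ints_sum) auto
  then show ?thesis unfolding level_def by (metis Ints_cases floor_of_int)
qed

lemma level_mono:
  assumes "p \<le> q" and "q < l"
  shows "level p \<le> level q"
  unfolding level_def using assms eps_nonneg
  by (intro floor_mono mult_left_mono sum_mono2) auto

lemma level_last: "level (l - 1) = int d"
proof -
  have "{..l - 1} = {..<l}" using l_pos by auto
  then show ?thesis unfolding level_def using eps_sum by simp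
qed

lemma level_bounds:
  assumes "p < l"
  shows "0 \<le> level p" and "level p \<le> int d"
proof -
  show "0 \<le> level p"
    unfolding level_def using assms eps_nonneg by (auto intro!: mult_nonneg_nonneg sum_nonneg)
  show "level p \<le> int d"
    using level_mono[of p "l - 1"] assms level_last by simp
qed

lemma level_step:
  assumes "0 < p" and "p < l"
  shows "level p = level (p - 1) \<longleftrightarrow> eps p = 0"
proof -
  obtain k where k: "p = Suc k" using assms(1) not0_implies_Suc by blast
  have "(of_int (level p) :: rat) = of_int (level (p - 1)) + of_nat d * eps p"
    using of_int_level[of p] of_int_level[of "p - 1"] assms unfolding k
    by (simp add: algebra_simps)
  then have "level p = level (p - 1) \<longleftrightarrow> of_nat d * eps p = 0"
    by (metis add_cancel_left_right of_int_eq_iff)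
  then show ?thesis using d_pos by simp
qed

lemma Iset_level: "Iset l d eps t = {p. p < l \<and> level p = int t}"
proof -
  have "of_nat d * (\<Sum>i\<le>p. eps i) = of_nat t \<longleftrightarrow> level p = int t" if "p < l" for p
    using of_int_level[OF that] by (metis of_int_eq_iff of_int_of_nat_eq)
  then show ?thesis unfolding Iset_def by auto
qed

lemma Jset_level:
  assumes "0 < p" and "p < l"
  shows "p \<in> Jset l eps \<longleftrightarrow> level (p - 1) = level p"
  using level_step[OF assms] assms(2) unfolding Jset_def by auto

text \<open>For 1 \<le> t \<le> d-1 block t is I_t, and block d is I_d \<union> I_0,
  matching the recipe for C_[t].  Inside block d the elements of I_0 get slots
  after those of I_d and their sequences are shifted by -1.  With these
  conventions C_[t](F) counts, for each integer x, the members of block t whose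
  offset range contains x, and conditions (iii) and (iv) say exactly that the
  offset ranges decrease along the slots of each block.\<close>

definition block :: "nat \<Rightarrow> nat" where
  "block p = (if level p = 0 then d else nat (level p))"

definition offset :: "nat \<Rightarrow> int" where
  "offset p = (if level p = 0 then -1 else 0)"

definition slot :: "nat \<Rightarrow> nat" where
  "slot p = (if level p = 0 then p + l else p)"

definition block_members :: "nat \<Rightarrow> nat set" where
  "block_members G = {p. p < l \<and> block p = G}"

definition offset_range :: "(nat \<Rightarrow> nat \<Rightarrow> int) \<Rightarrow> nat \<Rightarrow> int set" where
  "offset_range F p = (\<lambda>x. x + offset p) ` range (F p)"

definition nested :: "(nat \<Rightarrow> nat \<Rightarrow> int) \<Rightarrow> bool" where
  "nested F \<longleftrightarrow> (\<forall>p\<in>Jset l eps. p \<noteq> 0 \<longrightarrow> range (F p) \<subseteq> range (F (p - 1)))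
      \<and> (0 \<in> Iset l d eps 0 \<longrightarrow> range (shiftS (-1) (F 0)) \<subseteq> range (F (l - 1)))"

definition block_chains :: "(nat \<Rightarrow> nat \<Rightarrow> int) \<Rightarrow> bool" where
  "block_chains F \<longleftrightarrow> (\<forall>G. chain_on (block_members G) slot (offset_range F))"

lemma finite_block_members: "finite (block_members G)"
  unfolding block_members_def by simp

lemma inj_on_slot: "inj_on slot (block_members G)"
  by (rule inj_onI) (auto simp: slot_def block_members_def split: if_splits)

lemma block_bounds:
  assumes "p < l"
  shows "1 \<le> block p" and "block p \<le> d"
  unfolding block_def using level_bounds[OF assms] d_pos by auto

lemma in_own_block: "p < l \<Longrightarrow> p \<in> block_members (block p)"
  unfolding block_members_def by simp

lemma Cbracket_block:
  assumes "t \<le> d"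
  shows "Cbracket l d eps F t x = cover_count (block_members (if t = 0 then d else t)) (offset_range F) x"
proof (cases "1 \<le> t \<and> t \<le> d - 1")
  case True
  then have "{p \<in> Iset l d eps t. x \<in> range (F p)}
      = {p \<in> block_members (if t = 0 then d else t). x \<in> offset_range F p}"
    using level_bounds unfolding Iset_level block_members_def offset_range_def block_def offset_def
    by (auto split: if_splits)
  then show ?thesis using True unfolding Cbracket_def cover_count_def by simp
next
  case False
  then have t: "t = 0 \<or> t = d" using assms by auto
  have "{p \<in> block_members (if t = 0 then d else t). x \<in> offset_range F p}
      = {p \<in> Iset l d eps 0. x \<in> range (shiftS (-1) (F p))} \<union> {p \<in> Iset l d eps d. x \<in> range (F p)}"
    using t level_bounds d_pos
    unfolding Iset_level block_members_def offset_range_def block_def offset_def range_shiftS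
    by (auto split: if_splits)
  moreover have "card ({p \<in> Iset l d eps 0. x \<in> range (shiftS (-1) (F p))} \<union> {p \<in> Iset l d eps d. x \<in> range (F p)})
      = card {p \<in> Iset l d eps 0. x \<in> range (shiftS (-1) (F p))} + card {p \<in> Iset l d eps d. x \<in> range (F p)}"
    by (rule card_Un_disjoint) (use d_pos in \<open>auto simp: Iset_level\<close>)
  ultimately show ?thesis
    unfolding Cbracket_def if_not_P[OF False] cover_count_def by simp
qed

text \<open>A member p of a block that is not first in slot order has an immediate
  predecessor: the position p-1 of the same level, or, if p = 0 has level 0, the
  last position l-1 (of level d) in block d.\<close>

lemma block_predecessor:
  assumes p: "p \<in> block_members G" and q: "q \<in> block_members G" and less: "slot q < slot p"
  obtains "0 < p" and "level (p - 1) = level p"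
    | "p = 0" and "level 0 = 0"
proof (cases "level p = 0")
  case False
  have pq: "p < l" "q < l" "block p = block q"
    using p q by (auto simp: block_members_def)
  have "level q \<noteq> 0"
    using less False pq by (auto simp: slot_def)
  then have "q < p" and "level q = level p"
    using less False pq level_bounds[of p] level_bounds[of q]
    by (auto simp: slot_def block_def)
  moreover have "level q \<le> level (p - 1)" and "level (p - 1) \<le> level p"
    using \<open>q < p\<close> pq by (auto intro!: level_mono)
  ultimately show ?thesis using that by simp
next
  case True
  have "p < l" using p by (simp add: block_members_def)
  show ?thesis
  proof (cases "p = 0")
    case False
    then have "level (p - 1) = level p"
      using True level_bounds[of "p - 1"] level_mono[of "p - 1" p] \<open>p < l\<close> by simp
    with False show ?thesis using that by simp
  qed (use True that in simp)
qed

lemma nested_predecessor: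
  assumes nested: "nested F"
    and p: "p \<in> block_members G" and q: "q \<in> block_members G" and less: "slot q < slot p"
  shows "\<exists>p'\<in>block_members G. slot p' + 1 = slot p \<and> offset_range F p \<subseteq> offset_range F p'"
  using p q less
proof (cases rule: block_predecessor)
  case 1
  have "p < l" and "block p = G" using p by (auto simp: block_members_def)
  then have "p \<in> Jset l eps" using 1 Jset_level by simp
  then have "range (F p) \<subseteq> range (F (p - 1))"
    using nested 1 unfolding nested_def by auto
  then have "offset_range F p \<subseteq> offset_range F (p - 1)"
    unfolding offset_range_def offset_def 1 by auto
  moreover have "p - 1 \<in> block_members G" and "slot (p - 1) + 1 = slot p"
    using 1 \<open>p < l\<close> \<open>block p = G\<close> by (auto simp: block_members_def block_def slot_def)
  ultimately show ?thesis by blast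
next
  case 2
  have last: "level (l - 1) \<noteq> 0" using level_last d_pos by simp
  have "0 \<in> Iset l d eps 0" using 2 l_pos by (simp add: Iset_level)
  then have "range (shiftS (-1) (F 0)) \<subseteq> range (F (l - 1))"
    using nested unfolding nested_def by auto
  then have "offset_range F p \<subseteq> offset_range F (l - 1)"
    using 2 last unfolding offset_range_def offset_def range_shiftS by simp
  moreover have "l - 1 \<in> block_members G" and "slot (l - 1) + 1 = slot p"
  proof -
    have "G = d" using 2 p by (simp add: block_members_def block_def)
    then show "l - 1 \<in> block_members G" and "slot (l - 1) + 1 = slot p"
      using 2 last level_last l_pos by (simp_all add: block_members_def block_def slot_def)
  qed
  ultimately show ?thesis by blast
qed

lemma block_chains_if_nested:
  assumes "nested F"
  shows "block_chains F"
proof -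
  have "offset_range F p \<subseteq> offset_range F q"
    if "p \<in> block_members G" "q \<in> block_members G" "slot p = slot q + k" for G k p q
    using that
  proof (induction k arbitrary: p)
    case 0
    then show ?case using inj_on_slot[of G] by (auto dest: inj_onD)
  next
    case (Suc k)
    then obtain p' where "p' \<in> block_members G" "slot p' + 1 = slot p"
      and "offset_range F p \<subseteq> offset_range F p'"
      using nested_predecessor[OF assms, of p G q] by auto
    with Suc.IH[of p'] Suc.prems show ?case by auto
  qed
  then show ?thesis
    unfolding block_chains_def chain_on_def by (metis le_add_diff_inverse)
qed

lemma nested_if_block_chains:
  assumes chains: "block_chains F"
  shows "nested F"
proof -
  have translate_subset: "(\<lambda>x. x + s) ` A \<subseteq> (\<lambda>x. x + s) ` B \<longleftrightarrow> A \<subseteq> B" for A B :: "int set" and s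
    by (rule inj_image_subset_iff) (simp add: inj_def)
  have "range (F p) \<subseteq> range (F (p - 1))" if "p \<in> Jset l eps" "p \<noteq> 0" for p
  proof -
    have "p < l" using that by (simp add: Jset_def)
    then have same: "level (p - 1) = level p" using that Jset_level by simp
    then have "p \<in> block_members (block p)" "p - 1 \<in> block_members (block p)"
      and "slot (p - 1) \<le> slot p"
      using \<open>p < l\<close> by (auto simp: block_members_def block_def slot_def)
    then have "offset_range F p \<subseteq> offset_range F (p - 1)"
      using chains unfolding block_chains_def chain_on_def by blast
    then show ?thesis unfolding offset_range_def offset_def same translate_subset .
  qed
  moreover have "range (shiftS (-1) (F 0)) \<subseteq> range (F (l - 1))" if "0 \<in> Iset l d eps 0"
  proof -
    have first: "level 0 = 0" and last: "level (l - 1) = int d" "level (l - 1) \<noteq> 0"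
      using that level_last d_pos by (simp_all add: Iset_level)
    then have "0 \<in> block_members d" "l - 1 \<in> block_members d" and "slot (l - 1) \<le> slot 0"
      using l_pos by (auto simp: block_members_def block_def slot_def)
    then have "offset_range F 0 \<subseteq> offset_range F (l - 1)"
      using chains unfolding block_chains_def chain_on_def by blast
    then show ?thesis
      unfolding offset_range_def offset_def range_shiftS using first last by simp
  qed
  ultimately show ?thesis unfolding nested_def by blast
qed

definition admissible :: "(nat \<Rightarrow> nat \<Rightarrow> int) \<Rightarrow> (nat \<Rightarrow> int) list \<Rightarrow> bool" where
  "admissible C Ct \<longleftrightarrow> length Ct = l \<and> (\<forall>p<l. strict_decr (Ct ! p))
     \<and> (\<forall>t\<le>d. Cbracket l d eps (\<lambda>p. Ct ! p) t = Cbracket l d eps C t)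
     \<and> nested (\<lambda>p. Ct ! p)"

text \<open>The offset range forced on the p-th member of an admissible family: the
  integers covered at least rank-of-p times by the offset ranges of C in p's block.\<close>

definition target :: "(nat \<Rightarrow> nat \<Rightarrow> int) \<Rightarrow> nat \<Rightarrow> int set" where
  "target C p = {x. rank_in (block_members (block p)) slot p
                    \<le> cover_count (block_members (block p)) (offset_range C) x}"

lemma cover_count_block:
  assumes "p < l"
  shows "cover_count (block_members (block p)) (offset_range F) x = Cbracket l d eps F (block p) x"
  using Cbracket_block[of "block p" F x] block_bounds[OF assms] by simp

text \<open>In an admissible family the p-th offset range is the target, because the
  block of p is a chain with the same cover counts as the offset ranges of C.\<close>

lemma offset_range_admissible:
  assumes adm: "admissible C Ct" and p: "p < l"
  shows "offset_range (\<lambda>p. Ct ! p) p = target C p"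
proof -
  let ?B = "block_members (block p)"
  have "chain_on ?B slot (offset_range (\<lambda>p. Ct ! p))"
    using adm block_chains_if_nested unfolding admissible_def block_chains_def by blast
  then have "offset_range (\<lambda>p. Ct ! p) p
      = {x. rank_in ?B slot p \<le> cover_count ?B (offset_range (\<lambda>p. Ct ! p)) x}"
    by (rule chain_on_determined[OF finite_block_members in_own_block[OF p]])
  moreover have "Cbracket l d eps (\<lambda>p. Ct ! p) (block p) = Cbracket l d eps C (block p)"
    using adm block_bounds[OF p] unfolding admissible_def by blast
  ultimately show ?thesis
    unfolding target_def by (simp add: cover_count_block[OF p])
qed

text \<open>The target lies between the intersection and the union of the offset ranges
  of C in the block, so it is a Maya set when the ranges of C are.\<close>

lemma target_maya_set:
  assumes maya: "\<And>q. q < l \<Longrightarrow> maya_set (range (C q))" and p: "p < l"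
  shows "maya_set (target C p)"
proof -
  let ?B = "block_members (block p)"
  have rank: "1 \<le> rank_in ?B slot p" "rank_in ?B slot p \<le> card ?B"
    using rank_in_pos[OF finite_block_members in_own_block[OF p]]
      rank_in_le_card[OF finite_block_members] by auto
  show ?thesis
  proof (rule maya_set_between[of ?B "offset_range C"])
    show "finite ?B" and "?B \<noteq> {}"
      using finite_block_members in_own_block[OF p] by auto
    show "maya_set (offset_range C q)" if "q \<in> ?B" for q
      unfolding offset_range_def using maya that by (intro maya_set_translate) (simp add: block_members_def)
    show "(\<Inter>q\<in>?B. offset_range C q) \<subseteq> target C p"
    proof
      fix x assume "x \<in> (\<Inter>q\<in>?B. offset_range C q)"
      then have "{q \<in> ?B. x \<in> offset_range C q} = ?B" by auto
      with rank(2) show "x \<in> target C p" unfolding target_def cover_count_def by simp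
    qed
    show "target C p \<subseteq> (\<Union>q\<in>?B. offset_range C q)"
    proof
      fix x assume "x \<in> target C p"
      then have "card {q \<in> ?B. x \<in> offset_range C q} \<noteq> 0"
        using rank(1) unfolding target_def cover_count_def by simp
      then have "{q \<in> ?B. x \<in> offset_range C q} \<noteq> {}" by (metis card.empty)
      then show "x \<in> (\<Union>q\<in>?B. offset_range C q)" by blast
    qed
  qed
qed

text \<open>Existence: take for the p-th sequence the decreasing enumeration of the
  target, shifted back by the offset of p.  In each block the targets are the level
  sets of the cover count of C, hence form a chain with the same cover counts.\<close>

lemma admissible_exists:
  assumes maya: "\<And>p. p < l \<Longrightarrow> maya_set (range (C p))"
  shows "\<exists>Ct. admissible C Ct"
proof -
  have "\<exists>A. strict_decr A \<and> range A = (\<lambda>x. x + - offset p) ` target C p" if "p < l" for p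
    by (rule maya_set_strict_decr_enum, rule maya_set_translate, rule target_maya_set[OF maya that])
  then obtain A where A: "\<And>p. p < l \<Longrightarrow> strict_decr (A p) \<and> range (A p) = (\<lambda>x. x + - offset p) ` target C p"
    by metis
  define Ct where "Ct = map A [0..<l]"
  have nth: "Ct ! p = A p" if "p < l" for p
    using that by (simp add: Ct_def)
  have offset_Ct: "offset_range (\<lambda>p. Ct ! p) p = target C p" if "p < l" for p
    using A[OF that] unfolding offset_range_def nth[OF that] by (simp add: image_image)
  define level_sets where "level_sets G p =
      {x. rank_in (block_members G) slot p \<le> cover_count (block_members G) (offset_range C) x}" for G p
  have level_sets: "offset_range (\<lambda>p. Ct ! p) p = level_sets G p" if "p \<in> block_members G" for G p
    using offset_Ct that unfolding target_def level_sets_def block_members_def by auto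
  have "block_chains (\<lambda>p. Ct ! p)"
    unfolding block_chains_def
  proof
    fix G
    have "chain_on (block_members G) slot (level_sets G)"
      unfolding level_sets_def by (rule level_sets_chain_on[OF finite_block_members])
    moreover have "chain_on (block_members G) slot (offset_range (\<lambda>p. Ct ! p))
        \<longleftrightarrow> chain_on (block_members G) slot (level_sets G)"
      by (rule chain_on_cong) (rule level_sets)
    ultimately show "chain_on (block_members G) slot (offset_range (\<lambda>p. Ct ! p))" by simp
  qed
  moreover have "Cbracket l d eps (\<lambda>p. Ct ! p) t = Cbracket l d eps C t" if "t \<le> d" for t
  proof
    fix x
    define G where "G = (if t = 0 then d else t)"
    have "cover_count (block_members G) (offset_range (\<lambda>p. Ct ! p)) x
        = cover_count (block_members G) (level_sets G) x"
      by (rule cover_count_cong[OF level_sets])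
    also have "\<dots> = cover_count (block_members G) (offset_range C) x"
      unfolding level_sets_def
      by (intro cover_count_level_sets finite_block_members inj_on_slot cover_count_le_card)
    finally show "Cbracket l d eps (\<lambda>p. Ct ! p) t x = Cbracket l d eps C t x"
      using Cbracket_block[OF that] unfolding G_def by simp
  qed
  ultimately have "admissible C Ct"
    using A nth nested_if_block_chains unfolding admissible_def by (simp add: Ct_def)
  then show ?thesis ..
qed

text \<open>Uniqueness: the offset ranges of an admissible family are the targets, and
  a strictly decreasing sequence is determined by its range.\<close>

lemma admissible_unique:
  assumes "admissible C Ct" and "admissible C Ct'"
  shows "Ct = Ct'"
proof (rule nth_equalityI)
  show "length Ct = length Ct'" using assms by (simp add: admissible_def)
  fix p assume "p < length Ct"
  then have p: "p < l" using assms(1) by (simp add: admissible_def)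
  have "offset_range (\<lambda>p. Ct ! p) p = offset_range (\<lambda>p. Ct' ! p) p"
    using offset_range_admissible[OF assms(1) p] offset_range_admissible[OF assms(2) p] by simp
  then have "range (Ct ! p) = range (Ct' ! p)"
    unfolding offset_range_def by (simp add: inj_image_eq_iff inj_def)
  then show "Ct ! p = Ct' ! p"
    using assms p by (intro strict_decr_eq_if_range_eq) (simp_all add: admissible_def)
qed

theorem ex1_admissible:
  assumes "\<And>p. p < l \<Longrightarrow> maya_set (range (C p))"
  shows "\<exists>!Ct. admissible C Ct"
  using admissible_exists[OF assms] admissible_unique by (rule ex_ex1I)

end

text \<open>The main theorem: eps = w_theta . theta satisfies the assumptions of the
  locale, and the sequences beta of the components of a multipartition have Maya
  sets as ranges.\<close>

theorem mainTheorem4: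
  fixes l n d :: nat and H :: "nat \<Rightarrow> rat" and r :: "nat \<Rightarrow> int"
    and w :: "nat \<Rightarrow> nat" and thw :: "nat \<Rightarrow> rat" and la :: "nat \<Rightarrow> nat \<Rightarrow> nat"
  assumes l_pos: "0 < l" and n_pos: "0 < n" and d_pos: "0 < d"
    and dH: "\<forall>i\<in>{1..<l}. of_nat d * H i \<in> \<int>"
    and r_sum: "(\<Sum>j<l. r j) = 0"
    and w_act: "Sact l w (theta l H) thw"
    and eps_bounds: "\<forall>j<l. 0 \<le> of_int (phi l r j) + thw j \<and> of_int (phi l r j) + thw j \<le> 1"
    and la_mp: "multipartition l n la"
  shows "let eps = (\<lambda>j. of_int (phi l r j) + thw j);
             C = (\<lambda>p. beta (r p) (la (inv w p)))
         in \<exists>!Ct :: (nat \<Rightarrow> int) list.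
              length Ct = l \<and> (\<forall>p<l. strict_decr (Ct ! p))
              \<and> (\<forall>t\<le>d. Cbracket l d eps (\<lambda>p. Ct ! p) t = Cbracket l d eps C t)
              \<and> (\<forall>p\<in>Jset l eps. p \<noteq> 0 \<longrightarrow> range (Ct ! p) \<subseteq> range (Ct ! (p - 1)))
              \<and> (0 \<in> Iset l d eps 0 \<longrightarrow> range (shiftS (-1) (Ct ! 0)) \<subseteq> range (Ct ! (l - 1)))"
proof -
  define eps where "eps j = of_int (phi l r j) + thw j" for j
  define C where "C p = beta (r p) (la (inv w p))" for p
  have thw_integral: "\<forall>j<l. of_nat d * thw j \<in> \<int>"
    using Sact_integral[OF w_act theta_integral[OF dH]] .
  interpret alcove_point l d eps
  proof
    show "0 \<le> eps j" if "j < l" for j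
      using eps_bounds that by (simp add: eps_def)
    show "of_nat d * eps j \<in> \<int>" if "j < l" for j
      using thw_integral that by (simp add: eps_def algebra_simps)
    show "(\<Sum>j<l. eps j) = 1"
      using Sact_sum[OF w_act] sum_theta[OF l_pos] sum_phi[OF l_pos]
      by (simp add: eps_def sum.distrib flip: of_int_sum)
  qed (use l_pos d_pos in simp_all)
  have "maya_set (range (C p))" if "p < l" for p
  proof -
    have "inv w p < l"
      using Sact_permutation[OF w_act] that by (intro inv_perm_below) auto
    then show ?thesis
      using la_mp unfolding C_def multipartition_def by (intro beta_maya_set) simp
  qed
  then have "\<exists>!Ct. admissible C Ct" by (rule ex1_admissible)
  then show ?thesis
    unfolding admissible_def nested_def Let_def eps_def[abs_def, symmetric] C_def[abs_def, symmetric] .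
qed

end
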